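(* Let $(H,K,I)$ be a split graph on $7$ distinct vertices with $I=\{a,b,u,v\}$ and $K=\{x,y,z\}$. Suppose the induced subgraphs $\langle a,x,y,u\rangle_H$ and $\langle b,x,z,v\rangle_H$ are both isomorphic to $P_4$. Then: (1) $u$ and $z$ are joined by a path $P$ in $A_4(H)$ with $V(P)\setminus\{z\}\subseteq I$; (2) $\Phi(H)$ is connected.
   Context: All graphs are finite and simple. A split graph is a graph $S$ whose vertex set is a disjoint union $V(S)=K\,\dot\cup\,I$ with $K$ a clique and $I$ an independent set; $(K,I)$ is called a bipartition of $S$, and $(S,K,I)$ denotes $S$ together with this fixed bipartition. $\langle W\rangle_G$ denotes the subgraph of $G$ induced by $W$. A 2-switch in a graph $G$ is performed on four distinct vertices $a,b,c,d$ with $ab,cd\in E(G)$ and $ac,bd\notin E(G)$: it deletes $ab,cd$ and adds $ac,bd$; $a,b,c,d$ are said to participate in it. $A_4(G)$ is the graph with vertex set $V(G)$ in which distinct $u,v$ are adjacent iff some 2-switch on $G$ has both $u$ and $v$ among its participating vertices. For a split graph $(S,K,I)$ and distinct $u,v\in I$, $\sigma_{uv}(S)$ is the number of induced subgraphs of $S$ isomorphic to $P_4$ containing both $u$ and $v$. The factor graph $\Phi(S)$ is the loopless multigraph with vertex set $I$ having exactly $\sigma_{uv}(S)$ parallel edges between $u$ and $v$. Graph notions (connected, complete, clique, etc.) applied to $\Phi(S)$ refer to its underlying simple graph, in which $u\sim v$ iff $\sigma_{uv}(S)\ge1$. *)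

theory Defs
  imports Main
begin

definition simple_graph :: "'a set \<Rightarrow> ('a \<Rightarrow> 'a \<Rightarrow> bool) \<Rightarrow> bool" where
  "simple_graph V E \<longleftrightarrow> finite V \<and> (\<forall>p q. E p q \<longrightarrow> E q p) \<and> (\<forall>p. \<not> E p p)
     \<and> (\<forall>p q. E p q \<longrightarrow> p \<in> V \<and> q \<in> V)"

definition split_graph :: "'a set \<Rightarrow> ('a \<Rightarrow> 'a \<Rightarrow> bool) \<Rightarrow> 'a set \<Rightarrow> 'a set \<Rightarrow> bool" where
  "split_graph V E K I \<longleftrightarrow> simple_graph V E \<and> V = K \<union> I \<and> K \<inter> I = {}
     \<and> (\<forall>p\<in>K. \<forall>q\<in>K. p \<noteq> q \<longrightarrow> E p q) \<and> (\<forall>p\<in>I. \<forall>q\<in>I. \<not> E p q)"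

definition induced_P4 :: "('a \<Rightarrow> 'a \<Rightarrow> bool) \<Rightarrow> 'a set \<Rightarrow> bool" where
  "induced_P4 E W \<longleftrightarrow> (\<exists>f. bij_betw f {0::nat..3} W \<and>
     (\<forall>i\<in>{0..3}. \<forall>j\<in>{0..3}. E (f i) (f j) \<longleftrightarrow> (i = j + 1 \<or> j = i + 1)))"

definition two_switch :: "'a set \<Rightarrow> ('a \<Rightarrow> 'a \<Rightarrow> bool) \<Rightarrow> 'a \<Rightarrow> 'a \<Rightarrow> 'a \<Rightarrow> 'a \<Rightarrow> bool" where
  "two_switch V E a b c d \<longleftrightarrow> a \<in> V \<and> b \<in> V \<and> c \<in> V \<and> d \<in> V \<and> distinct [a, b, c, d]
     \<and> E a b \<and> E c d \<and> \<not> E a c \<and> \<not> E b d"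

definition A4_adj :: "'a set \<Rightarrow> ('a \<Rightarrow> 'a \<Rightarrow> bool) \<Rightarrow> 'a \<Rightarrow> 'a \<Rightarrow> bool" where
  "A4_adj V E p q \<longleftrightarrow> p \<noteq> q \<and> (\<exists>a b c d. two_switch V E a b c d
     \<and> p \<in> {a, b, c, d} \<and> q \<in> {a, b, c, d})"

definition is_path :: "('a \<Rightarrow> 'a \<Rightarrow> bool) \<Rightarrow> 'a list \<Rightarrow> bool" where
  "is_path R ps \<longleftrightarrow> ps \<noteq> [] \<and> distinct ps \<and> (\<forall>i. Suc i < length ps \<longrightarrow> R (ps ! i) (ps ! Suc i))"

definition sigma :: "'a set \<Rightarrow> ('a \<Rightarrow> 'a \<Rightarrow> bool) \<Rightarrow> 'a \<Rightarrow> 'a \<Rightarrow> nat" where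
  "sigma V E u v = card {W. W \<subseteq> V \<and> u \<in> W \<and> v \<in> W \<and> induced_P4 E W}"

text \<open>Underlying simple graph of the factor graph Phi(S) on I.\<close>
definition Phi_adj :: "'a set \<Rightarrow> ('a \<Rightarrow> 'a \<Rightarrow> bool) \<Rightarrow> 'a set \<Rightarrow> 'a \<Rightarrow> 'a \<Rightarrow> bool" where
  "Phi_adj V E I u v \<longleftrightarrow> u \<in> I \<and> v \<in> I \<and> u \<noteq> v \<and> sigma V E u v \<ge> 1"

definition connected_on :: "'a set \<Rightarrow> ('a \<Rightarrow> 'a \<Rightarrow> bool) \<Rightarrow> bool" where
  "connected_on X R \<longleftrightarrow> (\<forall>p\<in>X. \<forall>q\<in>X. (\<lambda>s t. s \<in> X \<and> t \<in> X \<and> R s t)\<^sup>*\<^sup>* p q)"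

end

theory Submission imports Defs begin

(* An induced P4 of a split graph whose ends p, q lie in I has the shape p - s - t - q with s, t in K
   (the pattern alternating E p s t q), and any two of its vertices take part in the 2-switch it
   carries. So the two given P4s make a - u and b - v edges of Phi(H), and u - a, b - z, v - z edges
   of A4(H). Comparing how a, u see x, y with how b, v see x, z, a case split on the edges to y and
   to z produces a third such P4 joining {a, u} to {b, v}; it connects Phi(H) and, read in A4(H),
   completes a path from u to z. *)

definition alternating :: "('a \<Rightarrow> 'a \<Rightarrow> bool) \<Rightarrow> 'a \<Rightarrow> 'a \<Rightarrow> 'a \<Rightarrow> 'a \<Rightarrow> bool" where
  "alternating E p s t q \<longleftrightarrow> E p s \<and> \<not> E p t \<and> E q t \<and> \<not> E q s"

lemma alternating_commute: "alternating E p s t q \<longleftrightarrow> alternating E q t s p"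
  unfolding alternating_def by blast

lemma split_graph_symp: "split_graph V E K I \<Longrightarrow> symp E"
  unfolding split_graph_def simple_graph_def symp_def by blast

lemma split_graph_irreflp: "split_graph V E K I \<Longrightarrow> irreflp E"
  unfolding split_graph_def simple_graph_def by (blast intro: irreflpI)

lemma split_graph_finite: "split_graph V E K I \<Longrightarrow> finite V"
  unfolding split_graph_def simple_graph_def by blast

lemma split_graph_clique: "split_graph V E K I \<Longrightarrow> s \<in> K \<Longrightarrow> t \<in> K \<Longrightarrow> s \<noteq> t \<Longrightarrow> E s t"
  unfolding split_graph_def by blast

lemma split_graph_independent: "split_graph V E K I \<Longrightarrow> p \<in> I \<Longrightarrow> q \<in> I \<Longrightarrow> \<not> E p q"
  unfolding split_graph_def by blast

lemma split_graph_disjoint: "split_graph V E K I \<Longrightarrow> K \<inter> I = {}"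
  unfolding split_graph_def by blast

lemma induced_P4I:
  assumes "symp E" "irreflp E" "distinct [p, s, t, q]"
    and "E p s" "E s t" "E t q" "\<not> E p t" "\<not> E s q" "\<not> E p q"
  shows "induced_P4 E {p, s, t, q}"
proof -
  define f where "f i = (if i = 0 then p else if i = 1 then s else if i = 2 then t else q)" for i :: nat
  have f: "f 0 = p" "f (Suc 0) = s" "f 2 = t" "f 3 = q" by (simp_all add: f_def)
  have dom: "{0..3::nat} = {0, 1, 2, 3}" by auto
  have "E s p" "E t s" "E q t" "\<not> E t p" "\<not> E q s" "\<not> E q p"
    using assms(1,4-9) by (blast dest: sympD)+
  moreover have "\<not> E p p" "\<not> E s s" "\<not> E t t" "\<not> E q q"
    using assms(2) by (blast dest: irreflpD)+
  ultimately have "\<forall>i\<in>{0..3}. \<forall>j\<in>{0..3}. E (f i) (f j) \<longleftrightarrow> (i = j + 1 \<or> j = i + 1)"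
    using assms(4-9) unfolding dom by (simp add: f)
  moreover have "bij_betw f {0..3} {p, s, t, q}"
    using assms(3) unfolding bij_betw_def inj_on_def dom by (auto simp: f)
  ultimately show ?thesis unfolding induced_P4_def by blast
qed

lemma induced_P4E:
  assumes "induced_P4 E W"
  obtains p s t q where "W = {p, s, t, q}" "distinct [p, s, t, q]"
    "E p s" "E s p" "E s t" "E t s" "E t q" "E q t"
    "\<not> E p t" "\<not> E t p" "\<not> E s q" "\<not> E q s" "\<not> E p q" "\<not> E q p"
proof -
  obtain f where bij: "bij_betw f {0::nat..3} W"
    and adj: "\<forall>i\<in>{0..3}. \<forall>j\<in>{0..3}. E (f i) (f j) \<longleftrightarrow> (i = j + 1 \<or> j = i + 1)"
    using assms unfolding induced_P4_def by blast
  have dom: "{0..3::nat} = {0, 1, 2, 3}" by auto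
  have "W = {f 0, f 1, f 2, f 3}" "distinct [f 0, f 1, f 2, f 3]"
    using bij unfolding bij_betw_def inj_on_def dom by auto
  with adj show ?thesis unfolding dom by (intro that) auto
qed

lemma induced_P4_A4_adj:
  assumes "induced_P4 E W" "W \<subseteq> V" "p \<in> W" "q \<in> W" "p \<noteq> q"
  shows "A4_adj V E p q"
proof -
  obtain p' s t q' where W: "W = {p', s, t, q'}" and "distinct [p', s, t, q']"
    and "E s p'" "E q' t" "\<not> E s q'" "\<not> E p' t"
    using assms(1) by (rule induced_P4E)
  then have "two_switch V E s p' q' t"
    using assms(2) unfolding two_switch_def by auto
  then show ?thesis
    using assms(3-5) unfolding A4_adj_def W by blast
qed

lemma induced_P4_has_neighbour:
  assumes "induced_P4 E W" "w \<in> W"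
  shows "\<exists>w'\<in>W. E w w'"
  using assms(1) by (rule induced_P4E) (use assms(2) in blast)

lemma induced_P4_has_non_neighbour:
  assumes "induced_P4 E W" "w \<in> W"
  shows "\<exists>w'\<in>W. w' \<noteq> w \<and> \<not> E w w'"
  using assms(1) by (rule induced_P4E) (use assms(2) in auto)

lemma split_graph_induced_P4_iff:
  assumes "split_graph V E K I" "p \<in> I" "q \<in> I" "p \<noteq> q" "s \<in> K" "t \<in> K" "s \<noteq> t"
  shows "induced_P4 E {p, s, t, q} \<longleftrightarrow> alternating E p s t q \<or> alternating E p t s q"
proof -
  have I: "\<not> E p p" "\<not> E p q" "\<not> E q p" "\<not> E q q"
    using assms(2,3) by (simp_all add: split_graph_independent[OF assms(1)])
  have K: "E s t" "E t s"
    using assms(5-7) by (simp_all add: split_graph_clique[OF assms(1)])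
  have sym: "E s p \<longleftrightarrow> E p s" "E t p \<longleftrightarrow> E p t" "E s q \<longleftrightarrow> E q s" "E t q \<longleftrightarrow> E q t"
    using split_graph_symp[OF assms(1)] unfolding symp_def by blast+
  show ?thesis
  proof
    assume P4: "induced_P4 E {p, s, t, q}"
    have "E p s \<or> E p t" "E q s \<or> E q t"
      using induced_P4_has_neighbour[OF P4, of p] induced_P4_has_neighbour[OF P4, of q] I
      by blast+
    moreover have "\<not> E p s \<or> \<not> E q s" "\<not> E p t \<or> \<not> E q t"
      using induced_P4_has_non_neighbour[OF P4, of s] induced_P4_has_non_neighbour[OF P4, of t] K sym
      by blast+
    ultimately show "alternating E p s t q \<or> alternating E p t s q"
      unfolding alternating_def by blast
  next
    have "distinct [p, s, t, q]" "distinct [p, t, s, q]"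
      using assms split_graph_disjoint[OF assms(1)] by auto
    note P4I = this[THEN induced_P4I[OF split_graph_symp[OF assms(1)] split_graph_irreflp[OF assms(1)]]]
    assume "alternating E p s t q \<or> alternating E p t s q"
    then show "induced_P4 E {p, s, t, q}"
    proof
      assume "alternating E p s t q"
      then show ?thesis
        using P4I(1) K I sym unfolding alternating_def by simp
    next
      assume "alternating E p t s q"
      then have "induced_P4 E {p, t, s, q}"
        using P4I(2) K I sym unfolding alternating_def by simp
      then show ?thesis by (simp add: insert_commute)
    qed
  qed
qed

lemma Phi_adj_iff:
  assumes "finite V"
  shows "Phi_adj V E I p q \<longleftrightarrow>
    p \<in> I \<and> q \<in> I \<and> p \<noteq> q \<and> (\<exists>W \<subseteq> V. p \<in> W \<and> q \<in> W \<and> induced_P4 E W)"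
proof -
  have "finite {W. W \<subseteq> V \<and> p \<in> W \<and> q \<in> W \<and> induced_P4 E W}"
    by (rule finite_subset[of _ "Pow V"]) (auto simp: assms)
  then show ?thesis
    unfolding Phi_adj_def sigma_def by (auto simp: Suc_le_eq card_gt_0_iff)
qed

lemma Phi_adjI:
  assumes "finite V" "p \<in> I" "q \<in> I" "p \<noteq> q" "induced_P4 E W" "W \<subseteq> V" "p \<in> W" "q \<in> W"
  shows "Phi_adj V E I p q"
  using assms by (auto simp: Phi_adj_iff)

lemma Phi_adj_A4_adj: "finite V \<Longrightarrow> Phi_adj V E I p q \<Longrightarrow> A4_adj V E p q"
  by (auto simp: Phi_adj_iff intro: induced_P4_A4_adj)

lemma symp_Phi_adj: "symp (Phi_adj V E I)"
  unfolding symp_def Phi_adj_def sigma_def by (auto simp: conj_commute conj_left_commute)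

lemma split_graph_Phi_adj_if_alternating:
  assumes "split_graph V E K I" "p \<in> I" "q \<in> I" "p \<noteq> q" "s \<in> K" "t \<in> K"
    and "alternating E p s t q"
  shows "Phi_adj V E I p q"
proof -
  have "s \<noteq> t" using assms(7) unfolding alternating_def by blast
  then have "induced_P4 E {p, s, t, q}"
    using split_graph_induced_P4_iff[OF assms(1-6)] assms(7) by blast
  moreover have "{p, s, t, q} \<subseteq> V"
    using assms(1-3,5,6) unfolding split_graph_def by blast
  ultimately show ?thesis
    using Phi_adjI[OF split_graph_finite[OF assms(1)] assms(2-4)] by simp
qed

lemma split_graph_induced_P4_ends:
  assumes "split_graph V E K I" "p \<in> I" "q \<in> I" "p \<noteq> q" "s \<in> K" "t \<in> K" "s \<noteq> t"
    and "induced_P4 E {p, s, t, q}"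
  obtains p' q' where "{p', q'} = {p, q}" "alternating E p' s t q'"
proof -
  have "alternating E p s t q \<or> alternating E p t s q"
    using split_graph_induced_P4_iff[OF assms(1-7)] assms(8) by blast
  then show thesis
  proof
    assume "alternating E p s t q"
    then show thesis by (rule that[OF refl])
  next
    assume "alternating E p t s q"
    then have "alternating E q s t p" by (simp add: alternating_commute)
    then show thesis by (rule that[OF insert_commute])
  qed
qed

lemma alternating_bridge:
  assumes "alternating E p x y p'" "alternating E q x z q'"
  obtains p0 q0 s t where "p0 \<in> {p, p'}" "q0 \<in> {q, q'}" "s \<in> {x, y, z}" "t \<in> {x, y, z}"
    "alternating E p0 s t q0"
proof (cases "E q y")
  case False
  then have "alternating E p' y x q" using assms unfolding alternating_def by blast
  then show thesis using that[of p' q y x] by simp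
next
  case True
  show thesis
  proof (cases "E p z")
    case False
    then have "alternating E p x z q'" using assms unfolding alternating_def by blast
    then show thesis using that[of p q' x z] by simp
  next
    case True
    then have "alternating E p z y q" using \<open>E q y\<close> assms unfolding alternating_def by blast
    then show thesis using that[of p q z y] by simp
  qed
qed

lemma connected_onI:
  assumes "symp R" "c \<in> X" "\<And>w. w \<in> X \<Longrightarrow> (\<lambda>s t. s \<in> X \<and> t \<in> X \<and> R s t)\<^sup>*\<^sup>* c w"
  shows "connected_on X R"
proof -
  have "symp (\<lambda>s t. s \<in> X \<and> t \<in> X \<and> R s t)\<^sup>*\<^sup>*"
    using assms(1) by (intro symp_rtranclp) (auto simp: symp_def)
  then show ?thesis
    unfolding connected_on_def using assms(2,3) by (meson rtranclp_trans sympD)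
qed

lemma connected_on_bridged_pairs:
  assumes "symp R" "R a u" "R b v" "R p q" "p \<in> {a, u}" "q \<in> {b, v}"
  shows "connected_on {a, b, u, v} R"
proof (rule connected_onI[OF assms(1)])
  let ?R = "\<lambda>s t. s \<in> {a, b, u, v} \<and> t \<in> {a, b, u, v} \<and> R s t"
  have edges: "?R a u" "?R u a" "?R b v" "?R v b" "?R p q"
    using assms by (auto dest: sympD)
  have from_p: "?R\<^sup>*\<^sup>* p a" "?R\<^sup>*\<^sup>* p u" "?R\<^sup>*\<^sup>* p q"
    using assms(5) edges by auto
  have from_q: "?R\<^sup>*\<^sup>* q b" "?R\<^sup>*\<^sup>* q v"
    using assms(6) edges by auto
  show "?R\<^sup>*\<^sup>* p w" if "w \<in> {a, b, u, v}" for w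
    using that from_p rtranclp_trans[OF from_p(3) from_q(1)] rtranclp_trans[OF from_p(3) from_q(2)]
    by blast
  show "p \<in> {a, b, u, v}" using assms(5) by blast
qed

lemma is_path_singleton: "is_path R [p]"
  unfolding is_path_def by simp

lemma is_path_Cons_Cons:
  "is_path R (p # q # ps) \<longleftrightarrow> p \<notin> set (q # ps) \<and> R p q \<and> is_path R (q # ps)"
  unfolding is_path_def by (auto simp: less_Suc_eq_0_disj)

lemma path_through_bridge:
  assumes "R u a" "R p q" "R q z" "p \<in> {a, u}" "distinct [u, a, q, z]"
  obtains ps where "is_path R ps" "hd ps = u" "last ps = z" "set ps \<subseteq> {u, a, q, z}"
proof (cases "p = u")
  case True
  then have "is_path R [u, q, z]"
    using assms by (simp add: is_path_Cons_Cons is_path_singleton)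
  then show thesis by (rule that) auto
next
  case False
  then have "is_path R [u, a, q, z]"
    using assms by (simp add: is_path_Cons_Cons is_path_singleton)
  then show thesis by (rule that) auto
qed

theorem lemma2p1:
  fixes V :: "'v set" and E :: "'v \<Rightarrow> 'v \<Rightarrow> bool" and a b u v x y z :: 'v
  assumes "distinct [a, b, u, v, x, y, z]"
    and "V = {a, b, u, v, x, y, z}"
    and "split_graph V E {x, y, z} {a, b, u, v}"
    and "induced_P4 E {a, x, y, u}"
    and "induced_P4 E {b, x, z, v}"
  shows "(\<exists>ps. is_path (A4_adj V E) ps \<and> hd ps = u \<and> last ps = z
            \<and> set ps - {z} \<subseteq> {a, b, u, v})
         \<and> connected_on {a, b, u, v} (Phi_adj V E {a, b, u, v})"
proof -
  let ?I = "{a, b, u, v}" and ?K = "{x, y, z}"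
  have fin: "finite V" using assms(3) by (rule split_graph_finite)
  have in_I: "a \<in> ?I" "b \<in> ?I" "u \<in> ?I" "v \<in> ?I" and in_K: "x \<in> ?K" "y \<in> ?K" "z \<in> ?K"
    by simp_all
  have ne: "a \<noteq> u" "b \<noteq> v" "x \<noteq> y" "x \<noteq> z" using assms(1) by simp_all
  have sub: "{a, x, y, u} \<subseteq> V" "{b, x, z, v} \<subseteq> V" using assms(2) by blast+
  obtain p p' where pp: "{p, p'} = {a, u}" "alternating E p x y p'"
    by (rule split_graph_induced_P4_ends[OF assms(3) in_I(1,3) ne(1) in_K(1,2) ne(3) assms(4)])
  obtain q q' where qq: "{q, q'} = {b, v}" "alternating E q x z q'"
    by (rule split_graph_induced_P4_ends[OF assms(3) in_I(2,4) ne(2) in_K(1,3) ne(4) assms(5)])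
  obtain p0 q0 s t where p0: "p0 \<in> {p, p'}" and q0: "q0 \<in> {q, q'}"
    and st: "s \<in> ?K" "t \<in> ?K" and alt: "alternating E p0 s t q0"
    using alternating_bridge[OF pp(2) qq(2)] .
  have bridge: "p0 \<in> {a, u}" "q0 \<in> {b, v}"
    using p0 q0 unfolding pp(1) qq(1) .
  have Phi_bridge: "Phi_adj V E ?I p0 q0"
    using bridge st assms(1)
    by (intro split_graph_Phi_adj_if_alternating[OF assms(3) _ _ _ _ _ alt]) auto
  have "Phi_adj V E ?I a u" "Phi_adj V E ?I b v"
    using Phi_adjI[OF fin in_I(1,3) ne(1) assms(4) sub(1)]
      Phi_adjI[OF fin in_I(2,4) ne(2) assms(5) sub(2)] by simp_all
  then have "connected_on ?I (Phi_adj V E ?I)"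
    by (rule connected_on_bridged_pairs[OF symp_Phi_adj _ _ Phi_bridge bridge(1,2)])
  moreover obtain ps where "is_path (A4_adj V E) ps" "hd ps = u" "last ps = z"
    "set ps \<subseteq> {u, a, q0, z}"
  proof (rule path_through_bridge[where R = "A4_adj V E" and p = p0 and q = q0])
    show "A4_adj V E u a" "A4_adj V E q0 z"
      using induced_P4_A4_adj[OF assms(4) sub(1), of u a]
        induced_P4_A4_adj[OF assms(5) sub(2), of q0 z] bridge(2) assms(1) by auto
    show "A4_adj V E p0 q0" using Phi_adj_A4_adj[OF fin Phi_bridge] .
    show "p0 \<in> {a, u}" "distinct [u, a, q0, z]" using bridge assms(1) by auto
  qed
  ultimately show ?thesis using bridge(2) by blast
qed

end
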